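(* There is an absolute constant $c>0$ such that for every integer $n>0$ that is a power of $2$ and every integer $s$ with $0\le s<n$, if $X$ is the point set obtained from $\mathrm{BRS}(n)$ by a cyclic shift by $s$ units, then $\mathrm{WB}^{(2)}(X)\ge c\, n\log n$.
   Context: Bit reversal sequence: for an integer $i\ge0$, a set $\mathcal R$ of $2^i$ rows and a set $\mathcal C$ of $2^i$ columns, $\mathrm{BRS}(i,\mathcal R,\mathcal C)$ is defined recursively: $\mathrm{BRS}(0,\{R\},\{C\})$ is the single point $R\cap C$; and $\mathrm{BRS}(i+1,\mathcal R,\mathcal C)=\mathrm{BRS}(i,\mathcal R_{odd},\mathcal C_{left})\cup\mathrm{BRS}(i,\mathcal R_{even},\mathcal C_{right})$, where $\mathcal C_{left}$ are the leftmost $2^i$ columns of $\mathcal C$, $\mathcal C_{right}=\mathcal C\setminus\mathcal C_{left}$, and, indexing $\mathcal R=\{R_1,\dots,R_{2^{i+1}}\}$ from bottom to top, $\mathcal R_{odd}$ and $\mathcal R_{even}$ are the odd- and even-indexed rows. For $n=2^i$, $\mathrm{BRS}(n)=\mathrm{BRS}(i,\mathcal R,\mathcal C)$ with $\mathcal C$ the columns $x=1,\dots,n$ and $\mathcal R$ the rows $y=1,\dots,n$. The cyclic shift by $s$ units maps each point $(x,y)$ to $(((x-1+s)\bmod n)+1,\;y)$. Second Wilber bound: for a point set $X$ and $p\in X$, $\mathrm{funnel}(X,p)$ is the set of $q\in X$ with $q.y<p.y$ such that the smallest closed axis-parallel rectangle containing $p,q$ contains no point of $X\setminus\{p,q\}$;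 writing it as $a_1,\dots,a_r$ in increasing $y$-order, $\mathrm{alt}(X,p)$ is the number of $1\le i<r$ such that one of $a_i,a_{i+1}$ is strictly left of $p$ and the other strictly right of $p$; $\mathrm{WB}^{(2)}(X)=|X|+\sum_{p\in X}\mathrm{alt}(X,p)$. *)

theory Defs
  imports "HOL-Analysis.Analysis"
begin

text \<open>Points are pairs (x, y) of naturals: x = column, y = row.
  Rows are given as a list ordered bottom to top, columns as a list ordered left to right.\<close>

definition odd_rows :: "'a list \<Rightarrow> 'a list" where
  "odd_rows R = [R ! k. k \<leftarrow> [0..<length R], even k]"   \<comment> \<open>R_1, R_3, ... (1-based odd)\<close>

definition even_rows :: "'a list \<Rightarrow> 'a list" where
  "even_rows R = [R ! k. k \<leftarrow> [0..<length R], odd k]"   \<comment> \<open>R_2, R_4, ... (1-based even)\<close>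

primrec brs :: "nat \<Rightarrow> nat list \<Rightarrow> nat list \<Rightarrow> (nat \<times> nat) set" where
  "brs 0 R C = {(hd C, hd R)}"
| "brs (Suc i) R C = brs i (odd_rows R) (take (2^i) C) \<union> brs i (even_rows R) (drop (2^i) C)"

text \<open>BRS(n) for n = 2^i: columns x = 1..n, rows y = 1..n.\<close>
definition BRS :: "nat \<Rightarrow> (nat \<times> nat) set" where
  "BRS i = brs i [1..<2^i+1] [1..<2^i+1]"

definition cyc_shift :: "nat \<Rightarrow> nat \<Rightarrow> nat \<times> nat \<Rightarrow> nat \<times> nat" where
  "cyc_shift n s p = (((fst p - 1 + s) mod n) + 1, snd p)"

definition in_box :: "nat \<times> nat \<Rightarrow> nat \<times> nat \<Rightarrow> nat \<times> nat \<Rightarrow> bool" where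
  "in_box p q z \<longleftrightarrow> min (fst p) (fst q) \<le> fst z \<and> fst z \<le> max (fst p) (fst q)
                   \<and> min (snd p) (snd q) \<le> snd z \<and> snd z \<le> max (snd p) (snd q)"

definition funnel :: "(nat \<times> nat) set \<Rightarrow> nat \<times> nat \<Rightarrow> (nat \<times> nat) set" where
  "funnel X p = {q \<in> X. snd q < snd p \<and> (\<forall>z \<in> X - {p, q}. \<not> in_box p q z)}"

definition alt :: "(nat \<times> nat) set \<Rightarrow> nat \<times> nat \<Rightarrow> nat" where
  "alt X p = (let L = sorted_key_list_of_set snd (funnel X p) in
     card {i. i + 1 < length L \<and>
       ((fst (L ! i) < fst p \<and> fst p < fst (L ! (i+1))) \<or>
        (fst (L ! (i+1)) < fst p \<and> fst p < fst (L ! i)))})"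

definition WB2 :: "(nat \<times> nat) set \<Rightarrow> nat" where
  "WB2 X = card X + (\<Sum>p\<in>X. alt X p)"

end

theory Submission
  imports Defs
begin

text \<open>
  In \<open>BRS(2^i)\<close> the point in column \<open>k + 1\<close> lies in row \<open>bitrev i k + 1\<close>, where \<open>bitrev i\<close>
  reverses the \<open>i\<close> low bits. Hence columns that agree in their \<open>j\<close> lowest bits have their
  rows in one aligned block of \<open>2^(i - j)\<close> consecutive rows, and within that block the bit
  \<open>j\<close> decides which half a column falls into.

  Let \<open>x\<close> have bit \<open>j\<close> set and let its shifted column \<open>c\<close> satisfy
  \<open>2^j \<le> c < 2^i - 2^j\<close>. The partners \<open>x - 2^j\<close> and \<open>(x + 2^j) mod 2^i\<close> agree with \<open>x\<close> in
  the \<open>j\<close> lowest bits and have bit \<open>j\<close> clear, so they lie below \<open>x\<close>, in the shifted columns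
  \<open>c - 2^j\<close> and \<open>c + 2^j\<close>. A point in the rectangle
  spanned by \<open>x\<close> and a partner has its row in the same block, so its column is congruent to
  \<open>c\<close> modulo \<open>2^j\<close> while lying strictly within distance \<open>2^j\<close> of \<open>c\<close>, which is impossible.
  So both partners are in the funnel of \<open>x\<close>, on opposite sides of it, and the pairs for
  different scales are stacked in row order; each scale therefore contributes its own
  alternation. For every \<open>j < i - 2\<close> at least a quarter of all points admit the scale \<open>j\<close>,
  so with \<open>n = 2^i\<close> we get \<open>WB2 X \<ge> n + (i - 2) n / 4 \<ge> n log n / 4\<close>.
\<close>

section \<open>Bit reversal\<close>

primrec bitrev :: "nat \<Rightarrow> nat \<Rightarrow> nat" where
  "bitrev 0 k = 0"
| "bitrev (Suc i) k = 2 * bitrev i (k mod 2^i) + k div 2^i mod 2"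

lemma bitrev_less: "bitrev i k < 2^i"
proof (induction i arbitrary: k)
  case (Suc i)
  have "bitrev i (k mod 2^i) + 1 \<le> 2^i"
    using Suc.IH[of "k mod 2^i"] by simp
  then show ?case by simp
qed simp

lemma bitrev_mod: "bitrev i (k mod 2^i) = bitrev i k"
proof (cases i)
  case (Suc m)
  have "k mod 2^Suc m mod 2^m = k mod 2^m"
    by (simp add: mod_mod_cancel)
  moreover have "k mod 2^Suc m div 2^m mod 2 = k div 2^m mod 2"
    using div_exp_mod_exp_eq[of k m 1] by simp
  ultimately show ?thesis
    using Suc by simp
qed simp

lemma bitrev_div_pow: "m \<le> i \<Longrightarrow> bitrev i k div 2^(i - m) = bitrev m k"
proof (induction i arbitrary: k)
  case (Suc i)
  show ?case
  proof (cases "m = Suc i")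
    case False
    then have mi: "m \<le> i" using Suc.prems by simp
    have "bitrev (Suc i) k div 2^(Suc i - m) = bitrev (Suc i) k div 2 div 2^(i - m)"
      using mi by (simp add: Suc_diff_le div_mult2_eq)
    also have "\<dots> = bitrev i (k mod 2^i) div 2^(i - m)"
      by simp
    also have "\<dots> = bitrev m (k mod 2^i)"
      using Suc.IH mi by blast
    also have "\<dots> = bitrev m k"
      using mi by (metis bitrev_mod mod_mod_cancel le_imp_power_dvd)
    finally show ?thesis .
  next
    case True
    then show ?thesis by simp
  qed
next
  case 0
  then show ?case by simp
qed

lemma inj_on_bitrev: "inj_on (bitrev i) {..<2^i}"
proof (induction i)
  case (Suc i)
  show ?case
  proof (rule inj_onI)
    fix a b
    assume a: "a \<in> {..<2^Suc i}" and b: "b \<in> {..<2^Suc i}"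
      and eq: "bitrev (Suc i) a = bitrev (Suc i) b"
    have "a div 2^i < 2" "b div 2^i < 2"
      using a b by (simp_all add: less_mult_imp_div_less)
    moreover have "a div 2^i mod 2 = b div 2^i mod 2"
      using arg_cong[OF eq, of "\<lambda>n. n mod 2"] by simp
    moreover from this have "bitrev i (a mod 2^i) = bitrev i (b mod 2^i)"
      using eq by simp
    ultimately have "a div 2^i = b div 2^i" "a mod 2^i = b mod 2^i"
      using Suc.IH by (simp_all add: inj_on_eq_iff)
    then show "a = b"
      by (metis div_mult_mod_eq)
  qed
qed (simp add: inj_on_def)

lemma bitrev_eq_iff: "bitrev i a = bitrev i b \<longleftrightarrow> a mod 2^i = b mod 2^i"
  using inj_on_bitrev[of i]
  by (metis bitrev_mod inj_on_eq_iff lessThan_iff mod_less_divisor zero_less_power zero_less_numeral)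

lemma bitrev_less_bitrev:
  assumes "m < i" and "a mod 2^m = b mod 2^m" and "\<not> bit a m" and "bit b m"
  shows "bitrev i a < bitrev i b"
proof -
  have "bitrev i a div 2^(i - Suc m) = 2 * bitrev m (a mod 2^m)"
    using bitrev_div_pow[of "Suc m" i a] assms(1,3) by (simp add: bit_iff_odd even_iff_mod_2_eq_zero)
  moreover have "bitrev i b div 2^(i - Suc m) = 2 * bitrev m (a mod 2^m) + 1"
    using bitrev_div_pow[of "Suc m" i b] assms by (simp add: bit_iff_odd odd_iff_mod_2_eq_one)
  ultimately show ?thesis
    by (metis div_le_mono less_add_one not_less)
qed

lemma bitrev_between:
  assumes "j \<le> i" and "a mod 2^j = b mod 2^j"
    and "bitrev i a \<le> bitrev i c" and "bitrev i c \<le> bitrev i b"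
  shows "c mod 2^j = a mod 2^j"
proof -
  have "bitrev i a div 2^(i - j) = bitrev i b div 2^(i - j)"
    using assms(1,2) by (simp add: bitrev_div_pow bitrev_eq_iff)
  then have "bitrev i c div 2^(i - j) = bitrev i a div 2^(i - j)"
    using assms(3,4) by (metis div_le_mono le_antisym)
  then show ?thesis
    using assms(1) by (simp add: bitrev_div_pow bitrev_eq_iff)
qed

lemma bitrev_Suc_high: "k < 2^i \<Longrightarrow> bitrev (Suc i) (2^i + k) = 2 * bitrev i k + 1"
  by simp

lemma bit_imp_pow_le: "bit (x::nat) j \<Longrightarrow> 2^j \<le> x"
  by (metis bit_iff_odd div_less even_zero not_le)

lemma bit_add_pow_mod_iff:
  "j < i \<Longrightarrow> bit (((x::nat) + 2^j) mod 2^i) j \<longleftrightarrow> \<not> bit x j"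
proof -
  assume "j < i"
  then have "bit ((x + 2^j) mod 2^i) j = bit (x + 2^j) j"
    by (simp add: bit_take_bit_iff flip: take_bit_eq_mod)
  moreover have "(x + 2^j) div 2^j = x div 2^j + 1"
    by simp
  ultimately show ?thesis
    by (simp add: bit_iff_odd)
qed

section \<open>The shifted bit reversal sequence\<close>

lemma concat_map_if_singleton: "concat (map (\<lambda>x. if P x then [f x] else []) xs) = map f (filter P xs)"
  by (induction xs) auto

lemma odd_rows_eq: "length R = 2 * m \<Longrightarrow> odd_rows R = map (\<lambda>k. R ! (2 * k)) [0..<m]"
proof -
  have "filter even [0..<2 * m] = map (\<lambda>k. 2 * k) [0..<m]"
    by (induction m) (auto simp: mult_2)
  then show "length R = 2 * m \<Longrightarrow> ?thesis"
    unfolding odd_rows_def by (simp add: concat_map_if_singleton)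
qed

lemma even_rows_eq: "length R = 2 * m \<Longrightarrow> even_rows R = map (\<lambda>k. R ! (2 * k + 1)) [0..<m]"
proof -
  have "filter odd [0..<2 * m] = map (\<lambda>k. 2 * k + 1) [0..<m]"
    by (induction m) (auto simp: mult_2)
  then show "length R = 2 * m \<Longrightarrow> ?thesis"
    unfolding even_rows_def by (simp add: concat_map_if_singleton)
qed

lemma brs_eq_image:
  "length R = 2^i \<Longrightarrow> length C = 2^i \<Longrightarrow> brs i R C = (\<lambda>k. (C ! k, R ! bitrev i k)) ` {..<2^i}"
proof (induction i arbitrary: R C)
  case 0
  then show ?case by (cases R; cases C) auto
next
  case (Suc i)
  let ?m = "2^i :: nat"
  let ?f = "\<lambda>k. (C ! k, R ! bitrev (Suc i) k)"
  have R: "length R = 2 * ?m" using Suc.prems by simp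
  have "brs i (odd_rows R) (take ?m C) = ?f ` {..<?m}"
    using Suc.IH[of "odd_rows R" "take ?m C"] Suc.prems odd_rows_eq[OF R]
    by (auto simp: bitrev_less intro!: image_cong)
  moreover have "brs i (even_rows R) (drop ?m C) = ?f ` ((+) ?m ` {..<?m})"
    using Suc.IH[of "even_rows R" "drop ?m C"] Suc.prems even_rows_eq[OF R]
    by (auto simp: bitrev_less bitrev_Suc_high image_image simp del: bitrev.simps intro!: image_cong)
  moreover have "{..<?m} \<union> (+) ?m ` {..<?m} = {..<2^Suc i}"
    by (auto simp: lessThan_atLeast0 mult_2)
  ultimately show ?case
    by (simp only: brs.simps image_Un[symmetric])
qed

lemma BRS_eq: "BRS i = (\<lambda>k. (k + 1, bitrev i k + 1)) ` {..<2^i}"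
  unfolding BRS_def
  by (subst brs_eq_image) (auto simp del: upt_Suc simp: bitrev_less intro!: image_cong)

definition brs_point :: "nat \<Rightarrow> nat \<Rightarrow> nat \<Rightarrow> nat \<times> nat" where
  "brs_point i s k = ((k + s) mod 2^i + 1, bitrev i k + 1)"

lemma shifted_BRS_eq: "cyc_shift (2^i) s ` BRS i = brs_point i s ` {..<2^i}"
  unfolding BRS_eq image_image cyc_shift_def brs_point_def by simp

lemma add_mod_inj:
  fixes a b n t :: nat
  assumes "a < n" and "b < n" and "(a + t) mod n = (b + t) mod n"
  shows "a = b"
  using assms
proof (induction a b rule: linorder_wlog)
  case (le a b)
  then have "n dvd b - a"
    using mod_eq_dvd_iff_nat[of "a + t" "b + t" n] by simp
  then show ?case
    using le by (metis dvd_imp_le le_antisym less_imp_diff_less not_less zero_less_diff)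
qed (simp add: eq_commute)

lemma mod_eq_less_imp_add_le: "a < b \<Longrightarrow> a mod d = b mod d \<Longrightarrow> a + d \<le> (b::nat)"
  using mod_eq_dvd_iff_nat[of a b d] by (auto dest: dvd_imp_le)

lemma inj_on_brs_point: "inj_on (brs_point i s) {..<2^i}"
  by (intro inj_onI) (auto simp: brs_point_def bitrev_eq_iff)

lemma inj_on_fst_brs_points: "inj_on fst (brs_point i s ` {..<2^i})"
  by (intro inj_onI) (auto simp: brs_point_def dest: add_mod_inj)

lemma inj_on_snd_brs_points: "inj_on snd (brs_point i s ` {..<2^i})"
  by (intro inj_onI) (auto simp: brs_point_def bitrev_eq_iff)

lemma brs_point_in_funnel:
  assumes x: "x < 2^i" and q: "q < 2^i" and "j \<le> i"
    and qx: "q mod 2^j = x mod 2^j" and below: "bitrev i q < bitrev i x"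
    and gap: "(q + s) mod 2^i + 2^j = (x + s) mod 2^i \<or> (x + s) mod 2^i + 2^j = (q + s) mod 2^i"
  shows "brs_point i s q \<in> funnel (brs_point i s ` {..<2^i}) (brs_point i s x)"
  unfolding funnel_def
proof (intro CollectI conjI ballI notI)
  show "brs_point i s q \<in> brs_point i s ` {..<2^i}"
    using q by simp
  show "snd (brs_point i s q) < snd (brs_point i s x)"
    using below by (simp add: brs_point_def)
  let ?col = "\<lambda>k. (k + s) mod 2^i"
  fix z
  assume "z \<in> brs_point i s ` {..<2^i} - {brs_point i s x, brs_point i s q}"
    and box: "in_box (brs_point i s x) (brs_point i s q) z"
  then obtain w where w: "w < 2^i" "z = brs_point i s w" "w \<noteq> x" "w \<noteq> q"
    by blast
  have rows: "bitrev i q \<le> bitrev i w" "bitrev i w \<le> bitrev i x"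
    and cols: "min (?col x) (?col q) \<le> ?col w" "?col w \<le> max (?col x) (?col q)"
    using box below by (auto simp: in_box_def brs_point_def w(2))
  have "?col w \<noteq> ?col x" "?col w \<noteq> ?col q"
    using add_mod_inj w(1,3,4) x q by blast+
  then have strict: "min (?col x) (?col q) < ?col w" "?col w < max (?col x) (?col q)"
    using cols by linarith+
  have "w mod 2^j = x mod 2^j"
    using bitrev_between[OF \<open>j \<le> i\<close> qx rows] qx by simp
  then have "(w + s) mod 2^j = (x + s) mod 2^j"
    by (rule mod_add_cong) (rule refl)
  then have "?col w mod 2^j = ?col x mod 2^j"
    using \<open>j \<le> i\<close> by (simp add: mod_mod_cancel le_imp_power_dvd)
  with gap strict show False
    using mod_eq_less_imp_add_le[of "?col w" "?col x" "2^j"]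
      mod_eq_less_imp_add_le[of "?col x" "?col w" "2^j"] by linarith
qed

section \<open>Alternations as side changes along the funnel\<close>

lemma ex_change_between:
  "m < n \<Longrightarrow> f m \<noteq> f n \<Longrightarrow> \<exists>k. m \<le> k \<and> k < n \<and> f k \<noteq> f (Suc k)"
proof (induction n)
  case (Suc n)
  show ?case
  proof (cases "m < n \<and> f m \<noteq> f n")
    case True
    then show ?thesis
      using Suc.IH less_SucI by blast
  next
    case False
    then have "m \<le> n" "f n \<noteq> f (Suc n)"
      using Suc.prems by (auto simp: less_Suc_eq)
    then show ?thesis
      by blast
  qed
qed simp

lemma card_le_side_changes_nth:
  fixes J :: "'c::linorder set"
  assumes intervals: "\<And>j. j \<in> J \<Longrightarrow> lo j < hi j \<and> hi j < length L \<and> P (L ! lo j) \<noteq> P (L ! hi j)"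
    and separated: "\<And>j k. j \<in> J \<Longrightarrow> k \<in> J \<Longrightarrow> j < k \<Longrightarrow> hi j \<le> lo k"
  shows "card J \<le> card {k. Suc k < length L \<and> P (L ! k) \<noteq> P (L ! Suc k)}"
proof -
  define change where "change j = (SOME k. lo j \<le> k \<and> k < hi j \<and> P (L ! k) \<noteq> P (L ! Suc k))" for j
  have change: "lo j \<le> change j \<and> change j < hi j \<and> P (L ! change j) \<noteq> P (L ! Suc (change j))"
    if "j \<in> J" for j
  proof -
    have "\<exists>k. lo j \<le> k \<and> k < hi j \<and> P (L ! k) \<noteq> P (L ! Suc k)"
      using ex_change_between[of "lo j" "hi j" "\<lambda>k. P (L ! k)"] intervals[OF that] by blast
    then show ?thesis
      unfolding change_def by (rule someI_ex)
  qed
  have "change j < change k" if "j \<in> J" "k \<in> J" "j < k" for j k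
    using change[OF that(1)] change[OF that(2)] separated[OF that] by linarith
  then have "inj_on change J"
    by (intro strict_mono_on_imp_inj_on strict_mono_onI)
  moreover have "change ` J \<subseteq> {k. Suc k < length L \<and> P (L ! k) \<noteq> P (L ! Suc k)}"
  proof (intro image_subsetI CollectI conjI)
    fix j
    assume "j \<in> J"
    from change[OF this] intervals[OF this]
    show "Suc (change j) < length L" "P (L ! change j) \<noteq> P (L ! Suc (change j))"
      by auto
  qed
  moreover have "finite {k. Suc k < length L \<and> P (L ! k) \<noteq> P (L ! Suc k)}"
    by (rule finite_subset[of _ "{..<length L}"]) auto
  ultimately show ?thesis
    by (rule card_inj_on_le)
qed

lemma sorted_wrt_key_less_imp_less:
  fixes key :: "'a \<Rightarrow> 'b::linorder"
  assumes "sorted_wrt (<) (map key L)" and "m < length L" and "n < length L"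
    and "key (L ! m) < key (L ! n)"
  shows "m < n"
proof (rule ccontr)
  assume "\<not> m < n"
  then have "n < m \<or> n = m"
    by linarith
  then show False
    using sorted_wrt_nth_less[OF assms(1), of n m] assms(2-4) by (auto dest: order.asym)
qed

lemma card_le_side_changes:
  fixes key :: "'a \<Rightarrow> 'b::linorder" and J :: "'c::linorder set"
  assumes sorted: "sorted_wrt (<) (map key L)"
    and pairs: "\<And>j. j \<in> J \<Longrightarrow> a j \<in> set L \<and> b j \<in> set L \<and> P (a j) \<noteq> P (b j)"
    and ordered: "\<And>j k. j \<in> J \<Longrightarrow> k \<in> J \<Longrightarrow> j < k \<Longrightarrow>
      max (key (a j)) (key (b j)) < min (key (a k)) (key (b k))"
  shows "card J \<le> card {k. Suc k < length L \<and> P (L ! k) \<noteq> P (L ! Suc k)}"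
proof -
  define pos where "pos q = (SOME n. n < length L \<and> L ! n = q)" for q
  have pos: "pos q < length L \<and> L ! pos q = q" if "q \<in> set L" for q
    using that unfolding pos_def in_set_conv_nth by (rule someI_ex)
  have pos_less: "pos q < pos r" if "q \<in> set L" "r \<in> set L" "key q < key r" for q r
    using sorted_wrt_key_less_imp_less[OF sorted, of "pos q" "pos r"] pos[OF that(1)] pos[OF that(2)] that(3)
    by simp
  show ?thesis
  proof (rule card_le_side_changes_nth[where lo = "\<lambda>j. min (pos (a j)) (pos (b j))"
        and hi = "\<lambda>j. max (pos (a j)) (pos (b j))"])
    fix j
    assume "j \<in> J"
    then have a: "pos (a j) < length L" "L ! pos (a j) = a j"
      and b: "pos (b j) < length L" "L ! pos (b j) = b j" and "P (a j) \<noteq> P (b j)"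
      using pos pairs by blast+
    then have "pos (a j) \<noteq> pos (b j)"
      by metis
    with a b \<open>P (a j) \<noteq> P (b j)\<close>
    show "min (pos (a j)) (pos (b j)) < max (pos (a j)) (pos (b j)) \<and> max (pos (a j)) (pos (b j)) < length L
        \<and> P (L ! min (pos (a j)) (pos (b j))) \<noteq> P (L ! max (pos (a j)) (pos (b j)))"
      by (auto simp: min_def max_def)
  next
    fix j k
    assume "j \<in> J" "k \<in> J" "j < k"
    then have "key (a j) < key (a k)" "key (a j) < key (b k)" "key (b j) < key (a k)" "key (b j) < key (b k)"
      using ordered by simp_all
    then show "max (pos (a j)) (pos (b j)) \<le> min (pos (a k)) (pos (b k))"
      using pairs[OF \<open>j \<in> J\<close>] pairs[OF \<open>k \<in> J\<close>] by (simp add: pos_less less_imp_le)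
  qed
qed

text \<open>Interpreting \<open>folding_insort_key\<close> at the class order yields facts about
  \<open>linorder.sorted_key_list_of_set (\<le>)\<close>, which is not syntactically the constant used in \<open>alt\<close>.\<close>

lemma linorder_insort_key_eq:
  "linorder.insort_key (\<le>) f x xs = insort_key (f :: 'b \<Rightarrow> 'a::linorder) x xs"
  by (induction xs) (simp_all add: linorder.insort_key.simps[OF linorder_class.linorder_axioms])

lemma linorder_sorted_key_list_of_set_eq:
  "linorder.sorted_key_list_of_set (\<le>) = (sorted_key_list_of_set :: ('b \<Rightarrow> 'a::linorder) \<Rightarrow> _)"
  by (intro ext)
    (simp add: linorder.sorted_key_list_of_set_def[OF linorder_class.linorder_axioms]
      sorted_key_list_of_set_def linorder_insort_key_eq[abs_def])

lemma sorted_funnel_list: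
  fixes X :: "(nat \<times> nat) set" and p :: "nat \<times> nat"
  assumes "finite X" and "inj_on snd X"
  defines "L \<equiv> sorted_key_list_of_set snd (funnel X p)"
  shows "set L = funnel X p" and "sorted_wrt (<) (map snd L)"
proof -
  interpret folding_insort_key "(\<le>) :: nat \<Rightarrow> nat \<Rightarrow> bool" "(<)" X snd
    by unfold_locales (rule assms(2))
  have "funnel X p \<subseteq> X"
    by (auto simp: funnel_def)
  moreover from this have "finite (funnel X p)"
    using assms(1) by (rule finite_subset)
  ultimately show "set L = funnel X p" and "sorted_wrt (<) (map snd L)"
    by (simp_all add: L_def linorder_sorted_key_list_of_set_eq[symmetric])
qed

lemma alt_eq_card_side_changes:
  assumes "finite X" and "inj_on fst X" and "inj_on snd X" and "p \<in> X"
  defines "L \<equiv> sorted_key_list_of_set snd (funnel X p)"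
  shows "alt X p = card {k. Suc k < length L \<and> (fst (L ! k) < fst p) \<noteq> (fst (L ! Suc k) < fst p)}"
proof -
  have off_column: "fst q \<noteq> fst p" if "q \<in> set L" for q
  proof -
    have "q \<in> X" "snd q < snd p"
      using that sorted_funnel_list(1)[OF assms(1,3)] by (auto simp: L_def funnel_def)
    then show ?thesis
      using assms(2,4) by (metis inj_on_eq_iff less_irrefl)
  qed
  have "(fst (L ! k) < fst p \<and> fst p < fst (L ! Suc k) \<or> fst (L ! Suc k) < fst p \<and> fst p < fst (L ! k))
      \<longleftrightarrow> (fst (L ! k) < fst p) \<noteq> (fst (L ! Suc k) < fst p)" if "Suc k < length L" for k
  proof -
    have "fst (L ! k) \<noteq> fst p" "fst (L ! Suc k) \<noteq> fst p"
      using that by (simp_all add: off_column)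
    then show ?thesis by auto
  qed
  then show ?thesis
    unfolding alt_def L_def[symmetric] Let_def Suc_eq_plus1[symmetric]
    by (intro arg_cong[where f = card] Collect_cong) blast
qed

section \<open>Witness scales\<close>

definition witness_bits :: "nat \<Rightarrow> nat \<Rightarrow> nat \<Rightarrow> nat set" where
  "witness_bits i s x = {j. j < i \<and> bit x j \<and> 2^j \<le> (x + s) mod 2^i \<and> (x + s) mod 2^i + 2^j < 2^i}"

lemma witness_partner:
  fixes x y :: nat
  assumes "bit x j" and "j < i" and "y \<in> {x - 2^j, (x + 2^j) mod 2^i}"
  shows "y mod 2^j = x mod 2^j \<and> \<not> bit y j"
  using assms(3)
proof
  assume y: "y = x - 2^j"
  have "x = y + 2^j"
    using y bit_imp_pow_le[OF assms(1)] by simp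
  then have "x mod 2^j = y mod 2^j" "x div 2^j = y div 2^j + 1"
    by simp_all
  then show ?thesis
    using assms(1) by (simp add: bit_iff_odd)
next
  assume "y \<in> {(x + 2^j) mod 2^i}"
  then have y: "y = (x + 2^j) mod 2^i"
    by simp
  have "y mod 2^j = (x + 2^j) mod 2^j"
    using assms(2) by (simp add: y mod_mod_cancel le_imp_power_dvd)
  then show ?thesis
    using assms by (simp add: y bit_add_pow_mod_iff)
qed

lemma witness_partner_columns:
  assumes "j \<in> witness_bits i s x"
  shows "(x - 2^j + s) mod 2^i + 2^j = (x + s) mod 2^i"
    and "((x + 2^j) mod 2^i + s) mod 2^i = (x + s) mod 2^i + 2^j"
proof -
  have "2^j \<le> x" and low: "2^j \<le> (x + s) mod 2^i" and high: "(x + s) mod 2^i + 2^j < 2^i"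
    using assms bit_imp_pow_le by (auto simp: witness_bits_def)
  then have "x - 2^j + s = (x + s) div 2^i * 2^i + ((x + s) mod 2^i - 2^j)"
    by (metis add_diff_assoc2 div_mult_mod_eq diff_add_assoc)
  then have "(x - 2^j + s) mod 2^i = ((x + s) mod 2^i - 2^j) mod 2^i"
    by (simp only: mod_mult_self3)
  also have "\<dots> = (x + s) mod 2^i - 2^j"
    by (meson diff_le_self le_less_trans mod_less mod_less_divisor pos2 zero_less_power)
  finally show "(x - 2^j + s) mod 2^i + 2^j = (x + s) mod 2^i"
    using low by simp
  show "((x + 2^j) mod 2^i + s) mod 2^i = (x + s) mod 2^i + 2^j"
    using high by (metis add.commute add.left_commute mod_add_right_eq mod_less)
qed

lemma witness_partner_in_funnel:
  assumes "x < 2^i" and "j \<in> witness_bits i s x" and y: "y \<in> {x - 2^j, (x + 2^j) mod 2^i}"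
  shows "brs_point i s y \<in> funnel (brs_point i s ` {..<2^i}) (brs_point i s x)"
proof -
  have j: "j < i" "bit x j"
    using assms(2) by (simp_all add: witness_bits_def)
  note partner = witness_partner[OF j(2,1) y]
  show ?thesis
  proof (rule brs_point_in_funnel)
    show "y < 2^i"
      using assms(1) y by auto
    show "bitrev i y < bitrev i x"
      using partner j by (intro bitrev_less_bitrev) simp_all
    show "(y + s) mod 2^i + 2^j = (x + s) mod 2^i \<or> (x + s) mod 2^i + 2^j = (y + s) mod 2^i"
      using y witness_partner_columns[OF assms(2)] by auto
  qed (use assms(1) j partner in simp_all)
qed

lemma witness_partners_ordered:
  assumes "j \<in> witness_bits i s x" and "k \<in> witness_bits i s x" and "j < k"
    and y: "y \<in> {x - 2^j, (x + 2^j) mod 2^i}" and z: "z \<in> {x - 2^k, (x + 2^k) mod 2^i}"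
  shows "bitrev i y < bitrev i z"
proof (rule bitrev_less_bitrev)
  have "j < i" "bit x j" "k < i" "bit x k"
    using assms(1,2) by (simp_all add: witness_bits_def)
  then have yx: "y mod 2^j = x mod 2^j \<and> \<not> bit y j" and zx: "z mod 2^k = x mod 2^k"
    using witness_partner y z by blast+
  show "j < i" "\<not> bit y j"
    using \<open>j < i\<close> yx by simp_all
  have "z mod 2^j = x mod 2^j" "bit z j = bit x j"
    using arg_cong[OF zx, of "\<lambda>n. n mod 2^j"] arg_cong[OF zx, of "\<lambda>n. bit n j"] \<open>j < k\<close>
    by (simp_all add: mod_mod_cancel le_imp_power_dvd bit_take_bit_iff flip: take_bit_eq_mod)
  then show "y mod 2^j = z mod 2^j" "bit z j"
    using yx \<open>bit x j\<close> by simp_all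
qed

lemma card_witness_bits_le_alt:
  assumes "x < 2^i"
  shows "card (witness_bits i s x) \<le> alt (brs_point i s ` {..<2^i}) (brs_point i s x)"
proof -
  let ?X = "brs_point i s ` {..<2^i}" and ?p = "brs_point i s x"
  define L where "L = sorted_key_list_of_set snd (funnel ?X ?p)"
  let ?lower = "\<lambda>j. brs_point i s (x - 2^j)" and ?upper = "\<lambda>j. brs_point i s ((x + 2^j) mod 2^i)"
  have X: "finite ?X" "inj_on fst ?X" "inj_on snd ?X" "?p \<in> ?X"
    using assms inj_on_fst_brs_points inj_on_snd_brs_points by simp_all
  note L = sorted_funnel_list[OF X(1,3), of ?p, folded L_def]
  have "card (witness_bits i s x)
      \<le> card {k. Suc k < length L \<and> (fst (L ! k) < fst ?p) \<noteq> (fst (L ! Suc k) < fst ?p)}"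
  proof (rule card_le_side_changes[OF L(2), where a = ?lower and b = ?upper])
    fix j
    assume j: "j \<in> witness_bits i s x"
    show "?lower j \<in> set L \<and> ?upper j \<in> set L \<and> (fst (?lower j) < fst ?p) \<noteq> (fst (?upper j) < fst ?p)"
    proof (intro conjI)
      show "?lower j \<in> set L" "?upper j \<in> set L"
        using witness_partner_in_funnel[OF assms j] by (simp_all add: L(1))
      have "(x - 2^j + s) mod 2^i < (x + s) mod 2^i"
        using witness_partner_columns(1)[OF j] by (metis less_add_same_cancel1 pos2 zero_less_power)
      then show "(fst (?lower j) < fst ?p) \<noteq> (fst (?upper j) < fst ?p)"
        using witness_partner_columns(2)[OF j] by (simp add: brs_point_def)
    qed
  next
    fix j k
    assume "j \<in> witness_bits i s x" "k \<in> witness_bits i s x" "j < k"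
    then show "max (snd (?lower j)) (snd (?upper j)) < min (snd (?lower k)) (snd (?upper k))"
      using witness_partners_ordered by (simp add: brs_point_def)
  qed
  also have "\<dots> = alt ?X ?p"
    using alt_eq_card_side_changes[OF X] by (simp add: L_def)
  finally show ?thesis .
qed

section \<open>Counting witness scales\<close>

lemma card_bit_set_ge:
  assumes "j < i"
  shows "2^i \<le> 2 * card {x. x < (2::nat)^i \<and> bit x j}"
proof -
  let ?set = "{x. x < (2::nat)^i \<and> bit x j}" and ?unset = "{x. x < (2::nat)^i \<and> \<not> bit x j}"
  let ?flip = "\<lambda>x. (x + 2^j) mod 2^i"
  have "inj_on ?flip ?unset"
    by (intro inj_onI) (auto dest: add_mod_inj)
  moreover have "?flip ` ?unset \<subseteq> ?set"
  proof (intro image_subsetI CollectI conjI)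
    fix x
    assume "x \<in> ?unset"
    then show "bit (?flip x) j"
      using assms by (simp add: bit_add_pow_mod_iff)
  qed simp
  ultimately have "card ?unset \<le> card ?set"
    by (intro card_inj_on_le) auto
  moreover have "?set \<union> ?unset = {..<2^i}" "?set \<inter> ?unset = {}"
    by auto
  then have "card ?set + card ?unset = 2^i"
    by (metis card_Un_disjoint card_lessThan finite_Un finite_lessThan)
  ultimately show ?thesis
    by linarith
qed

lemma card_witness_set_ge:
  assumes "j + 2 < i"
  shows "2^i \<le> 4 * card {x. x < (2::nat)^i \<and> j \<in> witness_bits i s x}"
proof -
  let ?set = "{x. x < (2::nat)^i \<and> bit x j}"
    and ?near_end = "{x. x < (2::nat)^i \<and> ((x + s) mod 2^i < 2^j \<or> 2^i \<le> (x + s) mod 2^i + 2^j)}"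
  have "inj_on (\<lambda>x. (x + s) mod 2^i) ?near_end"
    by (intro inj_onI) (auto dest: add_mod_inj)
  then have "card ?near_end = card ((\<lambda>x. (x + s) mod 2^i) ` ?near_end)"
    by (rule card_image[symmetric])
  also have "\<dots> \<le> card ({..<2^j} \<union> {2^i - 2^j..<(2::nat)^i})"
    by (intro card_mono) auto
  also have "\<dots> \<le> 2 * 2^j"
    using card_Un_le[of "{..<2^j}" "{2^i - 2^j..<(2::nat)^i}"] by simp
  finally have near_end: "4 * card ?near_end \<le> 2^i"
    using assms power_increasing[of "j + 3" i "2::nat"] by (simp add: power_add)
  have "?set - ?near_end \<subseteq> {x. x < 2^i \<and> j \<in> witness_bits i s x}"
    using assms by (auto simp: witness_bits_def)
  then have "card (?set - ?near_end) \<le> card {x. x < 2^i \<and> j \<in> witness_bits i s x}"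
    by (intro card_mono) auto
  moreover have "card ?set - card ?near_end \<le> card (?set - ?near_end)"
    by (intro diff_card_le_card_Diff) auto
  ultimately have "card ?set - card ?near_end \<le> card {x. x < 2^i \<and> j \<in> witness_bits i s x}"
    by linarith
  then show ?thesis
    using card_bit_set_ge[of j i] assms near_end by linarith
qed

lemma sum_card_witness_bits_ge: "(i - 2) * 2^i \<le> 4 * (\<Sum>x<2^i. card (witness_bits i s x))"
proof -
  have double_count: "(\<Sum>x<2^i. card {j \<in> {..<i - 2}. j \<in> witness_bits i s x})
      = (\<Sum>j<i - 2. card {x \<in> {..<2^i}. j \<in> witness_bits i s x})"
    by (rule sum_multicount_gen) auto
  have "(i - 2) * 2^i = (\<Sum>j<i - 2. 2^i)"
    by simp
  also have "\<dots> \<le> (\<Sum>j<i - 2. 4 * card {x \<in> {..<2^i}. j \<in> witness_bits i s x})"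
    by (intro sum_mono) (simp add: card_witness_set_ge)
  also have "\<dots> = 4 * (\<Sum>x<2^i. card {j \<in> {..<i - 2}. j \<in> witness_bits i s x})"
    by (simp only: double_count sum_distrib_left)
  also have "\<dots> \<le> 4 * (\<Sum>x<2^i. card (witness_bits i s x))"
    by (intro mult_le_mono2 sum_mono card_mono) (auto simp: witness_bits_def)
  finally show ?thesis .
qed

lemma WB2_shifted_BRS_ge: "i * 2^i \<le> 4 * WB2 (cyc_shift (2^i) s ` BRS i)"
proof -
  let ?X = "brs_point i s ` {..<2^i}"
  have "WB2 ?X = 2^i + (\<Sum>x<2^i. alt ?X (brs_point i s x))"
    unfolding WB2_def using inj_on_brs_point by (simp add: card_image sum.reindex)
  moreover have "(\<Sum>x<2^i. card (witness_bits i s x)) \<le> (\<Sum>x<2^i. alt ?X (brs_point i s x))"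
    by (intro sum_mono card_witness_bits_le_alt) simp
  moreover have "i * 2^i \<le> (i - 2) * 2^i + 4 * 2^i"
    by (simp flip: add_mult_distrib)
  ultimately show ?thesis
    using sum_card_witness_bits_ge[of i s] unfolding shifted_BRS_eq by linarith
qed

theorem lemma4p18:
  shows "\<exists>c::real. c > 0 \<and>
    (\<forall>i s::nat. s < 2^i \<longrightarrow>
       real (WB2 (cyc_shift (2^i) s ` BRS i)) \<ge> c * real (2^i) * log 2 (real (2^i)))"
proof (intro exI[of _ "1/4"] conjI allI impI)
  fix i s :: nat
  have "real (i * 2^i) \<le> real (4 * WB2 (cyc_shift (2^i) s ` BRS i))"
    using WB2_shifted_BRS_ge[of i s] by (simp only: of_nat_le_iff)
  then show "1/4 * real (2^i) * log 2 (real (2^i)) \<le> real (WB2 (cyc_shift (2^i) s ` BRS i))"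
    by (simp add: mult_ac)
qed simp

end
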